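(* Let $n'$ be an odd positive integer and $q\ge 3$. There exists an ordering of all words of $\mathbb{Z}_q^{n'}$ in which consecutive words have Lee distance $1$, beginning with $(0,0,\ldots,0)$ and ending with $(1,1,\ldots,1)$.
   Context: Lee distance between $v,u\in\mathbb{Z}_q^{n'}$ is $\sum_{i}\min\{|v_i-u_i|,q-|v_i-u_i|\}$, entries regarded as integers in $\{0,\ldots,q-1\}$. *)

theory Defs
  imports Main
begin

definition words :: "nat \<Rightarrow> nat \<Rightarrow> nat list set" where
  "words q n = {w. length w = n \<and> (\<forall>i<n. w ! i < q)}"

definition lee_dist :: "nat \<Rightarrow> nat list \<Rightarrow> nat list \<Rightarrow> nat" where
  "lee_dist q v u = (\<Sum>i<length v. min (nat \<bar>int (v ! i) - int (u ! i)\<bar>)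
                                       (q - nat \<bar>int (v ! i) - int (u ! i)\<bar>))"

end

(*
  With Lee distance 1 as adjacency, the words of Z_q^n form the torus C_q^n. Hamiltonian
  paths are built by a product construction: if P is a Hamiltonian path of Z_q^a and
  Q_1, ..., Q_|P| are Hamiltonian paths of Z_q^b, each Q_i ending where Q_(i+1) starts,
  then running through {w_i} x Q_i for the successive vertices w_i of P is a Hamiltonian
  path of Z_q^(a+b). In Z_q, the list 0, q-1, ..., 2, 1 is a Hamiltonian path from 0 to 1.

  For odd q, induct on n: over that path of Z_q, take Q, rev Q, ..., Q (q fibres, an odd
  number), where Q runs from 0...0 to 1...1 in Z_q^n. For even q, the torus is bipartite and
  no such path exists in even dimension, so one steps from n to n+2: over a path of Z_q^n
  the q^n fibres (an even number) are filled with A, rev A, ..., A, B, where A runs from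
  00 to 10 and B from 10 to 11 in Z_q^2.
*)

theory Submission
  imports Defs
begin

definition ham_path :: "('a \<Rightarrow> 'a \<Rightarrow> bool) \<Rightarrow> 'a set \<Rightarrow> 'a list \<Rightarrow> 'a \<Rightarrow> 'a \<Rightarrow> bool" where
  "ham_path E V ws s t \<longleftrightarrow>
     distinct ws \<and> set ws = V \<and> successively E ws \<and> ws \<noteq> [] \<and> hd ws = s \<and> last ws = t"

lemma ham_path_rev:
  assumes "symp E" "ham_path E V ws s t"
  shows "ham_path E V (rev ws) t s"
  using assms unfolding ham_path_def
  by (auto simp: hd_rev last_rev symp_def elim: successively_mono)

fun snake :: "('b \<Rightarrow> 'a \<Rightarrow> 'c) \<Rightarrow> 'b list \<Rightarrow> 'a list list \<Rightarrow> 'c list" where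
  "snake f (w # P) (Q # Qs) = map (f w) Q @ snake f P Qs"
| "snake f _ _ = []"

lemma set_snake:
  "length Qs = length P \<Longrightarrow> \<forall>Q\<in>set Qs. set Q = U \<Longrightarrow>
   set (snake f P Qs) = (\<lambda>(w, v). f w v) ` (set P \<times> U)"
  by (induction f P Qs rule: snake.induct) auto

lemma length_snake:
  "length Qs = length P \<Longrightarrow> \<forall>Q\<in>set Qs. set Q = U \<and> distinct Q \<Longrightarrow>
   length (snake f P Qs) = length P * card U"
  by (induction f P Qs rule: snake.induct) (auto simp: distinct_card)

lemma distinct_snake:
  assumes "length Qs = length P" "distinct P" "\<forall>Q\<in>set Qs. set Q = U \<and> distinct Q"
    and "inj_on (\<lambda>(w, v). f w v) (set P \<times> U)"
  shows "distinct (snake f P Qs)"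
proof (rule card_distinct)
  have "card (set (snake f P Qs)) = card (set P \<times> U)"
    using assms by (simp add: set_snake[of Qs P U] card_image)
  also have "\<dots> = length (snake f P Qs)"
    using assms by (simp add: length_snake[of Qs P U] card_cartesian_product distinct_card)
  finally show "card (set (snake f P Qs)) = length (snake f P Qs)" .
qed

lemma hd_snake:
  "length Qs = length P \<Longrightarrow> P \<noteq> [] \<Longrightarrow> [] \<notin> set Qs \<Longrightarrow>
   hd (snake f P Qs) = f (hd P) (hd (hd Qs))"
  by (cases P; cases Qs) (auto simp: hd_map)

lemma snake_eq_Nil_iff:
  "length Qs = length P \<Longrightarrow> [] \<notin> set Qs \<Longrightarrow> snake f P Qs = [] \<longleftrightarrow> P = []"
  by (cases P; cases Qs) auto

lemma last_snake:
  "length Qs = length P \<Longrightarrow> P \<noteq> [] \<Longrightarrow> [] \<notin> set Qs \<Longrightarrow>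
   last (snake f P Qs) = f (last P) (last (last Qs))"
  by (induction f P Qs rule: snake.induct) (auto simp: last_map snake_eq_Nil_iff)

lemma successively_snake:
  assumes "length Qs = length P" "[] \<notin> set Qs"
    and "successively E P" "\<forall>Q\<in>set Qs. successively F Q"
    and "successively (\<lambda>Q Q'. last Q = hd Q') Qs"
    and "\<And>w v v'. F v v' \<Longrightarrow> G (f w v) (f w v')"
    and "\<And>w w' v. E w w' \<Longrightarrow> G (f w v) (f w' v)"
  shows "successively G (snake f P Qs)"
  using assms
proof (induction f P Qs rule: snake.induct)
  case (1 f w P Q Qs)
  have "successively G (map (f w) Q)"
    unfolding successively_map using 1 by (auto intro: successively_mono[of F])
  moreover have "G (last (map (f w) Q)) (hd (snake f P Qs))" if "P \<noteq> []"
    using 1 that by (cases P; cases Qs) (auto simp: last_map hd_map successively_Cons)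
  ultimately show ?case
    using 1 by (auto simp: successively_append_iff successively_Cons snake_eq_Nil_iff)
qed auto

lemma ham_path_snake:
  assumes P: "ham_path E V P s t" and len: "length Qs = length P"
    and Qs: "\<forall>Q\<in>set Qs. ham_path F U Q (hd Q) (last Q)"
    and chain: "successively (\<lambda>Q Q'. last Q = hd Q') Qs"
    and inj: "inj_on (\<lambda>(w, v). f w v) (V \<times> U)"
    and img: "(\<lambda>(w, v). f w v) ` (V \<times> U) = W"
    and adj_inner: "\<And>w v v'. F v v' \<Longrightarrow> G (f w v) (f w v')"
    and adj_outer: "\<And>w w' v. E w w' \<Longrightarrow> G (f w v) (f w' v)"
  shows "ham_path G W (snake f P Qs) (f s (hd (hd Qs))) (f t (last (last Qs)))"
proof -
  have P': "distinct P" "set P = V" "successively E P" "P \<noteq> []" "hd P = s" "last P = t"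
    using P by (auto simp: ham_path_def)
  have Qs': "\<forall>Q\<in>set Qs. set Q = U \<and> distinct Q" "[] \<notin> set Qs"
      "\<forall>Q\<in>set Qs. successively F Q"
    using Qs by (auto simp: ham_path_def)
  show ?thesis
    unfolding ham_path_def
  proof (intro conjI)
    show "distinct (snake f P Qs)"
      using P' Qs' len inj by (intro distinct_snake) auto
    show "set (snake f P Qs) = W"
      using P' Qs' len img by (simp add: set_snake[of Qs P U])
    show "successively G (snake f P Qs)"
      by (rule successively_snake[of Qs P E F])
        (use len chain adj_inner adj_outer P' Qs' in auto)
    show "snake f P Qs \<noteq> []"
      using P' Qs' len by (simp add: snake_eq_Nil_iff)
    show "hd (snake f P Qs) = f s (hd (hd Qs))"
      using P' Qs' len by (simp add: hd_snake)
    show "last (snake f P Qs) = f t (last (last Qs))"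
      using P' Qs' len by (simp add: last_snake)
  qed
qed

definition alternating :: "nat \<Rightarrow> 'a \<Rightarrow> 'a \<Rightarrow> 'a list" where
  "alternating k x y = map (\<lambda>i. if even i then x else y) [0..<k]"

lemma length_alternating [simp]: "length (alternating k x y) = k"
  by (simp add: alternating_def)

lemma alternating_eq_Nil_iff [simp]: "alternating k x y = [] \<longleftrightarrow> k = 0"
  by (simp add: alternating_def)

lemma set_alternating_subset: "set (alternating k x y) \<subseteq> {x, y}"
  by (auto simp: alternating_def)

lemma hd_alternating: "k > 0 \<Longrightarrow> hd (alternating k x y) = x"
  by (simp add: alternating_def hd_map)

lemma last_alternating: "k > 0 \<Longrightarrow> last (alternating k x y) = (if odd k then x else y)"
  by (simp add: alternating_def last_map)

lemma successively_alternating: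
  "R x y \<Longrightarrow> R y x \<Longrightarrow> successively R (alternating k x y)"
  by (simp add: successively_conv_nth alternating_def)

lemma alternating_ham_path_rev:
  assumes "symp E" "ham_path E V ws s t"
  shows "\<forall>Q\<in>set (alternating k ws (rev ws)). ham_path E V Q (hd Q) (last Q)"
    and "successively (\<lambda>Q Q'. last Q = hd Q') (alternating k ws (rev ws))"
proof -
  have "ham_path E V ws (hd ws) (last ws)"
    using assms(2) by (simp add: ham_path_def)
  moreover have "ham_path E V (rev ws) (hd (rev ws)) (last (rev ws))"
    using ham_path_rev[OF assms] by (simp add: ham_path_def)
  ultimately show "\<forall>Q\<in>set (alternating k ws (rev ws)). ham_path E V Q (hd Q) (last Q)"
    using set_alternating_subset[of k ws "rev ws"] by auto
  show "successively (\<lambda>Q Q'. last Q = hd Q') (alternating k ws (rev ws))"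
    by (intro successively_alternating) (simp_all add: hd_rev last_rev)
qed

definition lee_adj :: "nat \<Rightarrow> nat list \<Rightarrow> nat list \<Rightarrow> bool" where
  "lee_adj q u v \<longleftrightarrow> length u = length v \<and> lee_dist q u v = 1"

lemma lee_dist_Nil [simp]: "lee_dist q [] u = 0"
  by (simp add: lee_dist_def)

lemma lee_dist_Cons:
  "lee_dist q (x # v) (y # u) =
     min (nat \<bar>int x - int y\<bar>) (q - nat \<bar>int x - int y\<bar>) + lee_dist q v u"
  unfolding lee_dist_def length_Cons sum.lessThan_Suc_shift by simp

lemma lee_dist_append:
  "length v = length v' \<Longrightarrow> lee_dist q (v @ w) (v' @ w') = lee_dist q v v' + lee_dist q w w'"
proof (induction v arbitrary: v')
  case (Cons x v)
  then show ?case by (cases v') (auto simp: lee_dist_Cons)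
qed simp

lemma lee_dist_self [simp]: "lee_dist q v v = 0"
  by (simp add: lee_dist_def)

lemma lee_dist_commute: "length v = length u \<Longrightarrow> lee_dist q v u = lee_dist q u v"
  by (simp add: lee_dist_def abs_minus_commute)

lemma symp_lee_adj: "symp (lee_adj q)"
  by (auto simp: symp_def lee_adj_def lee_dist_commute)

lemma lee_adj_append_prefix: "lee_adj q v v' \<Longrightarrow> lee_adj q (w @ v) (w @ v')"
  by (simp add: lee_adj_def lee_dist_append)

lemma lee_adj_append_suffix: "lee_adj q v v' \<Longrightarrow> lee_adj q (v @ w) (v' @ w)"
  by (simp add: lee_adj_def lee_dist_append)

lemma length_words: "v \<in> words q n \<Longrightarrow> length v = n"
  by (simp add: words_def)

lemma inj_on_append_words: "inj_on (\<lambda>(v, w). v @ w) (words q a \<times> words q b)"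
proof (rule inj_onI, clarify)
  fix v w v' w'
  assume "v \<in> words q a" "v' \<in> words q a" "v @ w = v' @ w'"
  then show "v = v' \<and> w = w'"
    by (simp add: length_words)
qed

lemma append_image_words: "(\<lambda>(v, w). v @ w) ` (words q a \<times> words q b) = words q (a + b)"
proof
  show "(\<lambda>(v, w). v @ w) ` (words q a \<times> words q b) \<subseteq> words q (a + b)"
    by (clarsimp simp: words_def nth_append)
  show "words q (a + b) \<subseteq> (\<lambda>(v, w). v @ w) ` (words q a \<times> words q b)"
  proof
    fix u assume "u \<in> words q (a + b)"
    then have "take a u \<in> words q a" "drop a u \<in> words q b"
      by (auto simp: words_def)
    then show "u \<in> (\<lambda>(v, w). v @ w) ` (words q a \<times> words q b)"
      by (intro image_eqI[of _ _ "(take a u, drop a u)"]) auto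
  qed
qed

lemma card_words: "card (words q n) = q ^ n"
proof -
  have "words q n = {xs. set xs \<subseteq> {..<q} \<and> length xs = n}"
    by (auto simp: words_def in_set_conv_nth subset_iff)
  then show ?thesis
    by (simp add: card_lists_length_eq)
qed

lemma ham_path_words_snake_left:
  assumes "ham_path (lee_adj q) (words q a) P s t" "length Qs = length P"
    and "\<forall>Q\<in>set Qs. ham_path (lee_adj q) (words q b) Q (hd Q) (last Q)"
    and "successively (\<lambda>Q Q'. last Q = hd Q') Qs"
  shows "ham_path (lee_adj q) (words q (a + b)) (snake (@) P Qs)
           (s @ hd (hd Qs)) (t @ last (last Qs))"
  by (rule ham_path_snake[OF assms])
    (simp_all add: append_image_words inj_on_append_words
      lee_adj_append_prefix lee_adj_append_suffix)

lemma ham_path_words_snake_right: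
  assumes "ham_path (lee_adj q) (words q b) P s t" "length Qs = length P"
    and "\<forall>Q\<in>set Qs. ham_path (lee_adj q) (words q a) Q (hd Q) (last Q)"
    and "successively (\<lambda>Q Q'. last Q = hd Q') Qs"
  shows "ham_path (lee_adj q) (words q (a + b)) (snake (\<lambda>w v. v @ w) P Qs)
           (hd (hd Qs) @ s) (last (last Qs) @ t)"
proof (rule ham_path_snake[OF assms])
  have swap: "(\<lambda>(w, v). v @ w) ` (B \<times> A) = (\<lambda>(v, w). v @ w) ` (A \<times> B)"
    for A B :: "nat list set"
    by auto
  show "(\<lambda>(w, v). v @ w) ` (words q b \<times> words q a) = words q (a + b)"
    by (simp add: swap append_image_words)
  show "inj_on (\<lambda>(w, v). v @ w) (words q b \<times> words q a)"
    using inj_on_append_words[of q a b] by (auto simp: inj_on_def)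
qed (simp_all add: lee_adj_append_prefix lee_adj_append_suffix)

definition lee_line :: "nat \<Rightarrow> nat list list" where
  "lee_line q = map (\<lambda>x. [x]) (0 # rev [1..<q])"

lemma ham_path_lee_line:
  assumes "q \<ge> 2"
  shows "ham_path (lee_adj q) (words q 1) (lee_line q) [0] [1]"
  unfolding ham_path_def
proof (intro conjI)
  show "distinct (lee_line q)"
    by (auto simp: lee_line_def distinct_map inj_on_def)
  have "words q 1 = (\<lambda>x. [x]) ` {..<q}"
    by (auto simp: words_def length_Suc_conv)
  moreover have "set (0 # rev [1..<q]) = {..<q}"
    using assms by auto
  ultimately show "set (lee_line q) = words q 1"
    by (simp only: lee_line_def set_map)
  have "successively (\<lambda>x y. lee_adj q [y] [x]) [1..<q]"
    by (auto simp: successively_conv_nth lee_adj_def lee_dist_Cons)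
  moreover have "lee_adj q [0] [q - 1]"
    using assms by (simp add: lee_adj_def lee_dist_Cons of_nat_diff)
  ultimately show "successively (lee_adj q) (lee_line q)"
    using assms by (simp add: lee_line_def successively_map successively_Cons hd_map hd_rev)
  show "lee_line q \<noteq> []" "hd (lee_line q) = [0]" "last (lee_line q) = [1]"
    using assms by (auto simp: lee_line_def last_map last_rev)
qed

lemma length_lee_line: "q > 0 \<Longrightarrow> length (lee_line q) = q"
  by (simp add: lee_line_def)

lemma ham_path_words_odd_modulus:
  assumes "odd q" "q \<ge> 3" "n \<ge> 1"
  shows "\<exists>P. ham_path (lee_adj q) (words q n) P (replicate n 0) (replicate n 1)"
  using assms(3)
proof (induction n rule: nat_induct_at_least)
  case base
  then show ?case
    using ham_path_lee_line[of q] assms by auto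
next
  case (Suc n)
  then obtain P where P: "ham_path (lee_adj q) (words q n) P (replicate n 0) (replicate n 1)"
    by blast
  define Qs where "Qs = alternating q P (rev P)"
  have "ham_path (lee_adj q) (words q (1 + n)) (snake (@) (lee_line q) Qs)
          ([0] @ hd (hd Qs)) ([1] @ last (last Qs))"
    using ham_path_lee_line alternating_ham_path_rev[OF symp_lee_adj P] assms
    by (intro ham_path_words_snake_left) (auto simp: Qs_def length_lee_line)
  moreover have "hd (hd Qs) = replicate n 0" "last (last Qs) = replicate n 1"
    using P assms by (simp_all add: Qs_def hd_alternating last_alternating ham_path_def)
  ultimately have "ham_path (lee_adj q) (words q (Suc n)) (snake (@) (lee_line q) Qs)
                     (replicate (Suc n) 0) (replicate (Suc n) 1)"
    by simp
  then show ?case ..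
qed

lemma ham_path_words2_00_10:
  assumes "even q" "q \<ge> 2"
  shows "\<exists>A. ham_path (lee_adj q) (words q 2) A [0, 0] [1, 0]"
proof -
  note L = ham_path_lee_line[OF assms(2)]
  define Qs where "Qs = alternating q (lee_line q) (rev (lee_line q))"
  have "ham_path (lee_adj q) (words q (1 + 1)) (snake (@) (lee_line q) Qs)
          ([0] @ hd (hd Qs)) ([1] @ last (last Qs))"
    using L alternating_ham_path_rev[OF symp_lee_adj L] assms
    by (intro ham_path_words_snake_left) (auto simp: Qs_def length_lee_line)
  moreover have "hd (hd Qs) = [0]" "last (last Qs) = [0]"
    using L assms by (auto simp: Qs_def hd_alternating last_alternating ham_path_def last_rev)
  ultimately show ?thesis
    by (auto simp: numeral_2_eq_2)
qed

lemma ham_path_words2_10_11: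
  assumes "even q" "q \<ge> 2"
  shows "\<exists>B. ham_path (lee_adj q) (words q 2) B [1, 0] [1, 1]"
proof -
  note L = ham_path_lee_line[OF assms(2)]
  note L' = ham_path_rev[OF symp_lee_adj L]
  define Qs where "Qs = alternating q (rev (lee_line q)) (lee_line q)"
  have "ham_path (lee_adj q) (words q (1 + 1)) (snake (\<lambda>w v. v @ w) (lee_line q) Qs)
          (hd (hd Qs) @ [0]) (last (last Qs) @ [1])"
    using L alternating_ham_path_rev[OF symp_lee_adj L'] assms
    by (intro ham_path_words_snake_right) (auto simp: Qs_def length_lee_line)
  moreover have "hd (hd Qs) = [1]" "last (last Qs) = [1]"
    using L assms by (auto simp: Qs_def hd_alternating last_alternating ham_path_def hd_rev)
  ultimately show ?thesis
    by (auto simp: numeral_2_eq_2)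
qed

lemma ham_path_words_even_modulus:
  assumes "even q" "q \<ge> 2" "odd n"
  shows "\<exists>P. ham_path (lee_adj q) (words q n) P (replicate n 0) (replicate n 1)"
  using assms(3)
proof (induction n rule: nat_induct2)
  case 1
  then show ?case
    using ham_path_lee_line[OF assms(2)] by auto
next
  case (step n)
  then obtain P where P: "ham_path (lee_adj q) (words q n) P (replicate n 0) (replicate n 1)"
    by auto
  obtain A where A: "ham_path (lee_adj q) (words q 2) A [0, 0] [1, 0]"
    using ham_path_words2_00_10 assms by blast
  obtain B where B: "ham_path (lee_adj q) (words q 2) B [1, 0] [1, 1]"
    using ham_path_words2_10_11 assms by blast
  have "length P = q ^ n"
    using P card_words[of q n] distinct_card[of P] by (auto simp: ham_path_def)
  moreover have "n > 0"
    using step.prems by (simp add: odd_pos)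
  ultimately have "even (length P)" "length P \<ge> 2"
    using assms self_le_power[of q n] by auto
  then have odd_len: "odd (length P - 1)" "length P - 1 > 0"
    by auto
  \<comment> \<open>\<open>length P = q ^ n\<close> is even, so \<open>A, rev A, ..., A\<close> ends at 10,
    where \<open>B\<close> starts\<close>
  define Qs where "Qs = alternating (length P - 1) A (rev A) @ [B]"
  have "ham_path (lee_adj q) (words q (2 + n)) (snake (\<lambda>w v. v @ w) P Qs)
          (hd (hd Qs) @ replicate n 0) (last (last Qs) @ replicate n 1)"
  proof (rule ham_path_words_snake_right[OF P])
    show "length Qs = length P"
      using odd_len by (simp add: Qs_def)
    show "\<forall>Q\<in>set Qs. ham_path (lee_adj q) (words q 2) Q (hd Q) (last Q)"
      using alternating_ham_path_rev(1)[OF symp_lee_adj A] B by (auto simp: Qs_def ham_path_def)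
    have "last (alternating (length P - 1) A (rev A)) = A"
      using odd_len by (simp add: last_alternating)
    then show "successively (\<lambda>Q Q'. last Q = hd Q') Qs"
      using alternating_ham_path_rev(2)[OF symp_lee_adj A] A B odd_len
      by (auto simp: Qs_def successively_append_iff ham_path_def)
  qed
  moreover have "hd (hd Qs) = [0, 0]" "last (last Qs) = [1, 1]"
    using odd_len A B by (simp_all add: Qs_def hd_append hd_alternating ham_path_def)
  ultimately have "ham_path (lee_adj q) (words q (n + 2)) (snake (\<lambda>w v. v @ w) P Qs)
                     (replicate (n + 2) 0) (replicate (n + 2) 1)"
    by (simp add: add.commute numeral_2_eq_2)
  then show ?case ..
qed simp

theorem lemma3:
  fixes n q :: nat
  assumes "odd n" and "n > 0" and "q \<ge> 3"
  shows "\<exists>ws :: nat list list.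
           distinct ws \<and> set ws = words q n \<and>
           (\<forall>j. Suc j < length ws \<longrightarrow> lee_dist q (ws ! j) (ws ! Suc j) = 1) \<and>
           hd ws = replicate n 0 \<and> last ws = replicate n 1"
proof -
  have "\<exists>P. ham_path (lee_adj q) (words q n) P (replicate n 0) (replicate n 1)"
    using assms ham_path_words_even_modulus[of q n] ham_path_words_odd_modulus[of q n]
    by (cases "even q") auto
  then obtain P where P: "ham_path (lee_adj q) (words q n) P (replicate n 0) (replicate n 1)" ..
  then have "\<forall>j. Suc j < length P \<longrightarrow> lee_dist q (P ! j) (P ! Suc j) = 1"
    by (auto simp: ham_path_def lee_adj_def dest: successively_nth)
  with P show ?thesis
    by (auto simp: ham_path_def)
qed

end
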